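(* Let $p$ be a prime, $q=p^m$, $1\le r<p$, and enumerate $\mathbb{F}_q^*=\{\alpha_1,\dots,\alpha_{q-1}\}$. Let $\mathcal{G}=(\mathbb{F}_q[T]/(T^{r+1}))^*/\mathbb{F}_q^*$; every non-identity element has order $p$, so $\mathcal{G}$ is an $\mathbb{F}_p$-vector space of dimension $rm$. For $I=\{i_1,\dots,i_t\}\subseteq\{1,\dots,q-1\}$, the subgroup ($\mathbb{F}_p$-subspace) of $\mathcal{G}$ generated by the classes of $1+\alpha_iT$, $i\in I$, has $\mathbb{F}_p$-dimension $rm$ if and only if the matrix $$G_I=\begin{pmatrix}\alpha_{i_1}&\cdots&\alpha_{i_t}\\ \alpha_{i_1}^2&\cdots&\alpha_{i_t}^2\\ \vdots&&\vdots\\ \alpha_{i_1}^r&\cdots&\alpha_{i_t}^r\end{pmatrix}\in\mathbb{F}_p^{rm\times t}$$ has rank $rm$ over $\mathbb{F}_p$, where each entry $\alpha_i^k$ is replaced by its coordinate column vector in $\mathbb{F}_p^m$ with respect to a fixed $\mathbb{F}_p$-basis of $\mathbb{F}_q$.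
   Context: $T$ is an indeterminate over $\mathbb{F}_q$; $\mathbb{F}_q^*$ denotes the image of the nonzero constants in $(\mathbb{F}_q[T]/(T^{r+1}))^*$. *)

theory Defs
  imports "HOL-Computational_Algebra.Polynomial" "HOL-Algebra.Coset" "HOL-Algebra.Generated_Groups"
begin

text \<open>Multiplication in the ring F_q[T]/(T^(r+1)), elements represented by
  polynomials of degree at most r (remainders modulo T^(r+1)).\<close>
definition trunc_mult :: "nat \<Rightarrow> 'a::field poly \<Rightarrow> 'a poly \<Rightarrow> 'a poly" where
  "trunc_mult r f g = (f * g) mod (monom 1 (r + 1))"

definition trunc_units :: "nat \<Rightarrow> ('a::field) poly monoid" where
  "trunc_units r = \<lparr> carrier = {f. degree f \<le> r \<and>
        (\<exists>g. degree g \<le> r \<and> trunc_mult r f g = 1)},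
     mult = trunc_mult r, one = 1 \<rparr>"

definition const_units :: "('a::field) poly set" where
  "const_units = {[:c:] | c. c \<noteq> 0}"

definition calG :: "nat \<Rightarrow> ('a::field) poly set monoid" where
  "calG r = trunc_units r Mod const_units"

definition calG_class :: "nat \<Rightarrow> 'a::field \<Rightarrow> 'a poly set" where
  "calG_class r a = const_units #>\<^bsub>trunc_units r\<^esub> [:1, a:]"

definition prime_subfield :: "'a::field set" where
  "prime_subfield = range of_nat"

definition is_Fp_basis :: "nat \<Rightarrow> (nat \<Rightarrow> 'a::field) \<Rightarrow> bool" where
  "is_Fp_basis m b \<longleftrightarrow> (\<forall>x. \<exists>!c. (\<forall>j<m. c j \<in> prime_subfield) \<and> (\<forall>j\<ge>m. c j = 0)
       \<and> x = (\<Sum>j<m. c j * b j))"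

definition Fp_coord :: "nat \<Rightarrow> (nat \<Rightarrow> 'a::field) \<Rightarrow> 'a \<Rightarrow> nat \<Rightarrow> 'a" where
  "Fp_coord m b x = (THE c. (\<forall>j<m. c j \<in> prime_subfield) \<and> (\<forall>j\<ge>m. c j = 0)
       \<and> x = (\<Sum>j<m. c j * b j))"

definition Fp_indep_cols :: "'r set \<Rightarrow> 'c set \<Rightarrow> ('r \<Rightarrow> 'c \<Rightarrow> 'a::field) \<Rightarrow> bool" where
  "Fp_indep_cols R J M \<longleftrightarrow> (\<forall>c. (\<forall>i\<in>J. c i \<in> prime_subfield) \<and>
       (\<forall>x\<in>R. (\<Sum>i\<in>J. c i * M x i) = 0) \<longrightarrow> (\<forall>i\<in>J. c i = 0))"

definition Fp_rank :: "'r set \<Rightarrow> 'c set \<Rightarrow> ('r \<Rightarrow> 'c \<Rightarrow> 'a::field) \<Rightarrow> nat" where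
  "Fp_rank R C M = Max {card J | J. J \<subseteq> C \<and> Fp_indep_cols R J M}"

text \<open>The matrix G_I: rows indexed by pairs (k, j), 1 \<le> k \<le> r, j < m (the j-th
  coordinate of alpha_i^k), columns indexed by i in I.\<close>
definition G_mat :: "nat \<Rightarrow> nat \<Rightarrow> (nat \<Rightarrow> 'a::field) \<Rightarrow> (nat \<Rightarrow> 'a) \<Rightarrow> nat \<times> nat \<Rightarrow> nat \<Rightarrow> 'a" where
  "G_mat m r b \<alpha> = (\<lambda>(k, j) i. Fp_coord m b (\<alpha> i ^ k) j)"

end

theory Submission
  imports Defs "HOL-Library.Function_Algebras" "HOL-Number_Theory.Cong"
begin

text \<open>The logarithmic derivative \<open>f \<mapsto> f'/f\<close>, read modulo \<open>T\<^sup>r\<close>, turns products of units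
  of \<open>F\<^sub>q[T]/(T\<^bsup>r+1\<^esup>)\<close> into sums, so it is a homomorphism into the additive group
  \<open>F\<^sub>q\<^sup>r\<close>. A unit lies in its kernel iff \<open>f' \<equiv> 0 mod T\<^sup>r\<close>, and because \<open>r < p\<close> this
  forces \<open>f\<close> to be constant; hence the quotient by the constants embeds into \<open>F\<^sub>q\<^sup>r\<close>.
  After twisting coefficients by signs, \<open>1 + a T\<close> is sent to \<open>(a, a\<^sup>2, \<dots>, a\<^sup>r)\<close>, so the
  subgroup generated by the classes of \<open>1 + \<alpha>\<^sub>i T\<close> is carried onto the \<open>F\<^sub>p\<close>-span of the
  columns \<open>(\<alpha>\<^sub>i\<^sup>k)\<^sub>k\<close>. That span has \<open>p\<^sup>\<rho>\<close> elements, \<open>\<rho>\<close> being the \<open>F\<^sub>p\<close>-rank of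
  these columns, which is the rank of \<open>G\<^sub>I\<close> because taking coordinates in an
  \<open>F\<^sub>p\<close>-basis is injective and \<open>F\<^sub>p\<close>-linear.\<close>


section \<open>Additive groups and quotients by kernels\<close>

definition additive_group :: "'a::ab_group_add monoid" where
  "additive_group = \<lparr>carrier = UNIV, mult = (+), one = 0\<rparr>"

lemma additive_group_simps [simp]:
  "carrier additive_group = UNIV" "mult additive_group = (+)" "one additive_group = 0"
  by (simp_all add: additive_group_def)

lemma comm_group_additive_group: "comm_group (additive_group :: 'a::ab_group_add monoid)"
  by (rule comm_groupI) (auto simp: add_ac intro: exI[of _ "- x" for x])

lemma inv_additive_group [simp]: "inv\<^bsub>additive_group\<^esub> x = - (x :: 'a::ab_group_add)"
proof -
  interpret comm_group "additive_group :: 'a monoid" by (rule comm_group_additive_group)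
  show ?thesis by (rule inv_equality) auto
qed

lemma (in group_hom) image_kernel_rcos:
  assumes "g \<in> carrier G"
  shows "h ` (kernel G H h #> g) = {h g}"
proof -
  have "h x = h g" if x: "x \<in> kernel G H h #> g" for x
  proof -
    obtain k where "k \<in> kernel G H h" "x = k \<otimes> g"
      using x unfolding r_coset_def by blast
    then show ?thesis using assms by (simp add: kernel_def)
  qed
  moreover have "g \<in> kernel G H h #> g"
    using assms subgroup_kernel by (rule G.rcos_self)
  ultimately show ?thesis by blast
qed

lemma (in group_hom) card_generate_FactGroup:
  assumes "S \<subseteq> carrier G"
  shows "card (generate (G Mod kernel G H h) ((\<lambda>g. kernel G H h #> g) ` S))
    = card (generate H (h ` S))"
proof -
  let ?K = "kernel G H h"
  let ?\<Phi> = "\<lambda>X. the_elem (h ` X)"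
  let ?T = "(\<lambda>g. ?K #> g) ` S"
  interpret Q: group "G Mod ?K"
    by (rule normal.factorgroup_is_group[OF normal_kernel])
  interpret \<Phi>: group_hom "G Mod ?K" H ?\<Phi>
    by (intro group_hom.intro group_hom_axioms.intro Q.is_group H.is_group FactGroup_hom)
  have T: "?T \<subseteq> carrier (G Mod ?K)"
    using assms by (auto simp: FactGroup_def RCOSETS_def)
  have "card (generate (G Mod ?K) ?T) = card (?\<Phi> ` generate (G Mod ?K) ?T)"
    by (rule card_image[symmetric, OF inj_on_subset[OF FactGroup_inj_on Q.generate_incl[OF T]]])
  also have "?\<Phi> ` generate (G Mod ?K) ?T = generate H (?\<Phi> ` ?T)"
    by (rule \<Phi>.generate_img[symmetric, OF T])
  also have "?\<Phi> ` ?T = h ` S"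
    unfolding image_image
    by (rule image_cong) (use assms in \<open>auto simp: image_kernel_rcos\<close>)
  finally show ?thesis .
qed

section \<open>Units of truncated polynomial rings\<close>

lemma cong_monom_iff_coeff:
  fixes a b :: "'a::field poly"
  shows "[a = b] (mod monom 1 n) \<longleftrightarrow> (\<forall>k<n. coeff a k = coeff b k)"
  by (simp add: cong_iff_dvd_diff monom_1_dvd_iff')

lemma cong_monom_mono:
  fixes a b :: "'a::field poly"
  shows "[a = b] (mod monom 1 n) \<Longrightarrow> m \<le> n \<Longrightarrow> [a = b] (mod monom 1 m)"
  by (simp add: cong_monom_iff_coeff)

lemma cong_monom_pderiv:
  fixes a b :: "'a::field poly"
  shows "[a = b] (mod monom 1 (Suc n)) \<Longrightarrow> [pderiv a = pderiv b] (mod monom 1 n)"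
  by (simp add: cong_monom_iff_coeff coeff_pderiv)

lemma cong_monom_imp_eq:
  fixes a b :: "'a::field poly"
  assumes "[a = b] (mod monom 1 (Suc r))" "degree a \<le> r" "degree b \<le> r"
  shows "a = b"
proof (rule poly_eqI)
  fix k
  show "coeff a k = coeff b k"
    using assms by (cases "k \<le> r") (auto simp: cong_monom_iff_coeff coeff_eq_0)
qed

lemma pderiv_cong_0_imp_const:
  fixes f :: "'a::field poly"
  assumes "[pderiv f = 0] (mod monom 1 r)" "degree f \<le> r" "r < CHAR('a) \<or> CHAR('a) = 0"
  shows "f = [:coeff f 0:]"
proof -
  have "coeff f (Suc j) = 0" for j
  proof (cases "j < r")
    case True
    have "\<not> CHAR('a) dvd Suc j"
      using assms(3) True by (auto dest: dvd_imp_le)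
    then have "of_nat (Suc j) \<noteq> (0 :: 'a)"
      by (simp only: of_nat_eq_0_iff_char_dvd not_False_eq_True)
    moreover have "of_nat (Suc j) * coeff f (Suc j) = 0"
      using assms(1) True by (simp add: cong_monom_iff_coeff coeff_pderiv)
    ultimately show ?thesis by simp
  next
    case False
    then show ?thesis using assms(2) by (simp add: coeff_eq_0)
  qed
  then show ?thesis
    by (intro poly_eqI) (simp add: coeff_pCons split: nat.split)
qed

lemma trunc_mult_cong: "[trunc_mult r f g = f * g] (mod monom 1 (Suc r))"
  by (simp add: trunc_mult_def)

lemma degree_trunc_mult: "degree (trunc_mult r f g) \<le> r"
proof (cases "trunc_mult r f g = 0")
  case False
  then show ?thesis
    using degree_mod_less'[of "monom 1 (Suc r)" "f * g"] by (simp add: trunc_mult_def degree_monom_eq)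
qed simp

lemma trunc_mult_assoc: "trunc_mult r (trunc_mult r f g) h = trunc_mult r f (trunc_mult r g h)"
  unfolding trunc_mult_def by (simp add: mod_mult_left_eq mod_mult_right_eq mult.assoc)

lemma trunc_mult_commute: "trunc_mult r f g = trunc_mult r g f"
  unfolding trunc_mult_def by (simp add: mult.commute)

lemma trunc_mult_1_left: "degree f \<le> r \<Longrightarrow> trunc_mult r 1 f = f"
  unfolding trunc_mult_def by (simp add: mod_poly_less degree_monom_eq)

lemma carrier_trunc_units:
  "carrier (trunc_units r) = {f. degree f \<le> r \<and> (\<exists>g. degree g \<le> r \<and> trunc_mult r f g = 1)}"
  by (simp add: trunc_units_def)

lemma mult_trunc_units [simp]: "mult (trunc_units r) = trunc_mult r"
  by (simp add: trunc_units_def)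

lemma one_trunc_units [simp]: "one (trunc_units r) = 1"
  by (simp add: trunc_units_def)

lemma comm_group_trunc_units: "comm_group (trunc_units r :: 'a::field poly monoid)"
proof (rule comm_groupI, goal_cases)
  case (1 f g)
  then obtain f' g' where f': "degree f' \<le> r" "trunc_mult r f f' = 1"
    and g': "degree g' \<le> r" "trunc_mult r g g' = 1" by (auto simp: carrier_trunc_units)
  have "trunc_mult r (trunc_mult r f g) (trunc_mult r f' g') =
        trunc_mult r (trunc_mult r f f') (trunc_mult r g g')"
    by (metis trunc_mult_assoc trunc_mult_commute)
  also have "\<dots> = 1" using f' g' by (simp add: trunc_mult_1_left)
  finally show ?case
    by (auto simp: carrier_trunc_units degree_trunc_mult intro!: exI[of _ "trunc_mult r f' g'"])
next
  case 2
  then show ?case by (auto simp: carrier_trunc_units trunc_mult_1_left intro!: exI[of _ 1])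
next
  case (3 f g h)
  then show ?case by (simp add: trunc_mult_assoc)
next
  case (4 f g)
  then show ?case by (simp add: trunc_mult_commute)
next
  case (5 f)
  then show ?case by (simp add: carrier_trunc_units trunc_mult_1_left)
next
  case (6 f)
  then obtain f' where "degree f' \<le> r" "trunc_mult r f f' = 1" "degree f \<le> r"
    by (auto simp: carrier_trunc_units)
  then show ?case by (auto simp: carrier_trunc_units trunc_mult_commute intro!: bexI[of _ f'])
qed

lemma const_in_trunc_units: "c \<noteq> 0 \<Longrightarrow> [:c:] \<in> carrier (trunc_units r)"
  by (auto simp: carrier_trunc_units trunc_mult_def mod_poly_less degree_monom_eq
           simp flip: one_pCons intro!: exI[of _ "[:inverse c:]"])

lemma trunc_units_inv_cong:
  assumes "f \<in> carrier (trunc_units r)" "n \<le> Suc r"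
  shows "[f * inv\<^bsub>trunc_units r\<^esub> f = 1] (mod monom 1 n)"
proof -
  interpret comm_group "trunc_units r" by (rule comm_group_trunc_units)
  have "trunc_mult r f (inv\<^bsub>trunc_units r\<^esub> f) = 1" using r_inv[OF assms(1)] by simp
  then have "[f * inv\<^bsub>trunc_units r\<^esub> f = 1] (mod monom 1 (Suc r))"
    using trunc_mult_cong[of r f] by (metis cong_sym)
  then show ?thesis using assms(2) by (rule cong_monom_mono)
qed

definition geom_poly :: "nat \<Rightarrow> 'a::field \<Rightarrow> 'a poly" where
  "geom_poly r a = (\<Sum>i\<le>r. monom ((- a) ^ i) i)"

lemma degree_geom_poly: "degree (geom_poly r a) \<le> r"
  unfolding geom_poly_def
  by (rule degree_sum_le) (auto intro: order.trans[OF degree_monom_le])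

lemma coeff_geom_poly: "j \<le> r \<Longrightarrow> coeff (geom_poly r a) j = (- a) ^ j"
  by (simp add: geom_poly_def coeff_sum coeff_monom)

lemma trunc_mult_geom_poly: "trunc_mult r [:1, a:] (geom_poly r a) = 1"
proof -
  have "[:0, - a:] = monom (- a) 1"
    by (simp add: monom_Suc monom_0)
  then have x_power: "[:0, - a:] ^ i = monom ((- a) ^ i) i" for i
    by (simp add: monom_power)
  have "[:1, a:] = 1 - [:0, - a:]"
    by (intro poly_eqI) (simp add: coeff_pCons split: nat.split)
  moreover have "geom_poly r a = (\<Sum>i\<le>r. [:0, - a:] ^ i)"
    by (simp add: geom_poly_def x_power)
  ultimately have "[:1, a:] * geom_poly r a = (1 - [:0, - a:]) * (\<Sum>i\<le>r. [:0, - a:] ^ i)"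
    by (simp only:)
  also have "\<dots> = 1 - [:0, - a:] ^ Suc r"
    by (rule sum_gp_basic)
  also have "\<dots> = 1 - monom ((- a) ^ Suc r) (Suc r)"
    by (simp only: x_power)
  finally have "[:1, a:] * geom_poly r a = 1 - monom ((- a) ^ Suc r) (Suc r)" .
  moreover have "[1 - monom ((- a) ^ Suc r) (Suc r) = 1] (mod monom 1 (Suc r))"
    by (simp add: cong_monom_iff_coeff coeff_monom)
  ultimately have "[trunc_mult r [:1, a:] (geom_poly r a) = 1] (mod monom 1 (Suc r))"
    using trunc_mult_cong by (metis cong_trans)
  then show ?thesis
    by (rule cong_monom_imp_eq) (simp_all add: degree_trunc_mult)
qed

lemma degree_linear_le: "1 \<le> r \<Longrightarrow> degree [:c, a:] \<le> r"
  by (simp add: degree_pCons_le order.trans)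

lemma linear_in_trunc_units: "1 \<le> r \<Longrightarrow> [:1, a:] \<in> carrier (trunc_units r)"
  using trunc_mult_geom_poly[of r a] degree_geom_poly[of r a]
  by (auto simp: carrier_trunc_units degree_linear_le)

lemma inv_linear_trunc_units:
  assumes "1 \<le> r"
  shows "inv\<^bsub>trunc_units r\<^esub> [:1, a:] = geom_poly r a"
proof -
  interpret comm_group "trunc_units r" by (rule comm_group_trunc_units)
  have "trunc_mult r (geom_poly r a) [:1, a:] = 1"
    by (subst trunc_mult_commute) (rule trunc_mult_geom_poly)
  then have "geom_poly r a \<in> carrier (trunc_units r)"
    using degree_geom_poly[of r a] degree_linear_le[OF assms]
    unfolding carrier_trunc_units by blast
  then show ?thesis
    using trunc_mult_geom_poly[of r a] linear_in_trunc_units[OF assms]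
    by (intro inv_equality) (simp_all add: trunc_mult_commute)
qed

section \<open>The logarithmic derivative\<close>

text \<open>The shift to positions \<open>1..r\<close> and the signs make the image of \<open>1 + a T\<close> exactly
  \<open>(a, a\<^sup>2, \<dots>, a\<^sup>r)\<close>.\<close>

definition trunc_log_deriv :: "nat \<Rightarrow> 'a::field poly \<Rightarrow> nat \<Rightarrow> 'a" where
  "trunc_log_deriv r f k = (if k \<in> {1..r}
     then (-1) ^ (k - 1) * coeff (pderiv f * inv\<^bsub>trunc_units r\<^esub> f) (k - 1) else 0)"

lemma trunc_log_deriv_hom:
  "trunc_log_deriv r \<in> hom (trunc_units r) (additive_group :: (nat \<Rightarrow> 'a::field) monoid)"
proof (rule homI)
  interpret U: comm_group "trunc_units r :: 'a poly monoid" by (rule comm_group_trunc_units)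
  fix f g :: "'a poly"
  assume f: "f \<in> carrier (trunc_units r)" and g: "g \<in> carrier (trunc_units r)"
  define u where "u = inv\<^bsub>trunc_units r\<^esub> f"
  define v where "v = inv\<^bsub>trunc_units r\<^esub> g"
  have inv_fg: "inv\<^bsub>trunc_units r\<^esub> (trunc_mult r f g) = trunc_mult r u v"
    using U.inv_mult[OF f g] by (simp add: u_def v_def)
  have fu: "[f * u = 1] (mod monom 1 r)"
    using trunc_units_inv_cong[OF f] by (simp add: u_def)
  have gv: "[g * v = 1] (mod monom 1 r)"
    using trunc_units_inv_cong[OF g] by (simp add: v_def)
  have "[pderiv (trunc_mult r f g) * trunc_mult r u v = pderiv (f * g) * (u * v)] (mod monom 1 r)"
    using cong_monom_pderiv[OF trunc_mult_cong] trunc_mult_cong cong_monom_mono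
    by (blast intro: cong_mult le_SucI)
  also have "pderiv (f * g) * (u * v) = pderiv f * u * (g * v) + pderiv g * v * (f * u)"
    by (simp add: pderiv_mult algebra_simps)
  also have "[\<dots> = pderiv f * u * 1 + pderiv g * v * 1] (mod monom 1 r)"
    by (intro cong_add cong_mult cong_refl fu gv)
  finally have "[pderiv (trunc_mult r f g) * trunc_mult r u v = pderiv f * u + pderiv g * v]
    (mod monom 1 r)" by simp
  then have "coeff (pderiv (trunc_mult r f g) * trunc_mult r u v) j
      = coeff (pderiv f * u) j + coeff (pderiv g * v) j" if "j < r" for j
    using that by (simp add: cong_monom_iff_coeff)
  then show "trunc_log_deriv r (f \<otimes>\<^bsub>trunc_units r\<^esub> g)
      = trunc_log_deriv r f \<otimes>\<^bsub>additive_group\<^esub> trunc_log_deriv r g"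
    by (auto simp: fun_eq_iff trunc_log_deriv_def inv_fg algebra_simps
             simp flip: u_def v_def)
qed simp

lemma kernel_trunc_log_deriv:
  assumes char: "r < CHAR('a) \<or> CHAR('a) = 0"
  shows "kernel (trunc_units r) additive_group (trunc_log_deriv r) = (const_units :: 'a::field poly set)"
proof
  show "const_units \<subseteq> kernel (trunc_units r) additive_group (trunc_log_deriv r)"
    by (auto simp: const_units_def kernel_def const_in_trunc_units trunc_log_deriv_def fun_eq_iff)
next
  show "kernel (trunc_units r) additive_group (trunc_log_deriv r) \<subseteq> (const_units :: 'a poly set)"
  proof
    fix f :: "'a poly"
    assume "f \<in> kernel (trunc_units r) additive_group (trunc_log_deriv r)"
    then have f: "f \<in> carrier (trunc_units r)" and log0: "trunc_log_deriv r f = 0"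
      by (auto simp: kernel_def)
    define u where "u = inv\<^bsub>trunc_units r\<^esub> f"
    have log_coeff: "coeff (pderiv f * u) j = 0" if "j < r" for j
      using fun_cong[OF log0, of "Suc j"] that by (simp add: trunc_log_deriv_def u_def)
    have "[f * u = 1] (mod monom 1 r)"
      using trunc_units_inv_cong[OF f] by (simp add: u_def)
    then have "[pderiv f * 1 = pderiv f * (f * u)] (mod monom 1 r)"
      by (rule cong_scalar_left[OF cong_sym])
    also have "pderiv f * (f * u) = pderiv f * u * f"
      by (simp only: ac_simps)
    also have "[\<dots> = 0 * f] (mod monom 1 r)"
      using log_coeff by (intro cong_mult cong_refl) (simp add: cong_monom_iff_coeff)
    finally have "[pderiv f = 0] (mod monom 1 r)"
      by simp
    moreover have "degree f \<le> r"
      using f by (simp add: carrier_trunc_units)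
    ultimately have "f = [:coeff f 0:]"
      using char by (rule pderiv_cong_0_imp_const)
    then obtain c where c: "f = [:c:]" by blast
    moreover obtain g where "trunc_mult r f g = 1"
      using f by (auto simp: carrier_trunc_units)
    ultimately have "c \<noteq> 0"
      by (auto simp: trunc_mult_def)
    with c show "f \<in> const_units"
      unfolding const_units_def by blast
  qed
qed

definition power_vec :: "nat \<Rightarrow> 'a::field \<Rightarrow> nat \<Rightarrow> 'a" where
  "power_vec r a k = (if k \<in> {1..r} then a ^ k else 0)"

lemma trunc_log_deriv_linear:
  assumes "1 \<le> r"
  shows "trunc_log_deriv r [:1, a:] = power_vec r a"
proof
  fix k
  show "trunc_log_deriv r [:1, a:] k = power_vec r a k"
  proof (cases "k \<in> {1..r}")
    case True
    then obtain j where k: "k = Suc j" and "j \<le> r" by (cases k) auto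
    then have "trunc_log_deriv r [:1, a:] k = (-1) ^ j * (a * (- a) ^ j)"
      using True by (simp add: trunc_log_deriv_def inv_linear_trunc_units[OF assms] pderiv_pCons
                       coeff_geom_poly)
    also have "\<dots> = ((-1) ^ j * (-1) ^ j) * (a * a ^ j)"
      by (simp only: power_minus[of a j] mult_ac)
    also have "\<dots> = a ^ k"
      by (simp add: k)
    finally show ?thesis using True by (simp add: power_vec_def)
  next
    case False
    then show ?thesis by (auto simp: trunc_log_deriv_def power_vec_def)
  qed
qed

lemma card_generate_calG:
  fixes A :: "'a::field set"
  assumes "1 \<le> r" "r < CHAR('a) \<or> CHAR('a) = 0"
  shows "card (generate (calG r) (calG_class r ` A)) = card (generate additive_group (power_vec r ` A))"
proof -
  interpret log: group_hom "trunc_units r :: 'a poly monoid" additive_group "trunc_log_deriv r"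
    by (intro group_hom.intro group_hom_axioms.intro comm_group.axioms(2) comm_group_trunc_units
        comm_group_additive_group trunc_log_deriv_hom)
  have kernel: "kernel (trunc_units r) additive_group (trunc_log_deriv r) = (const_units :: 'a poly set)"
    using assms(2) by (rule kernel_trunc_log_deriv)
  have linear: "(\<lambda>a. [:1, a:]) ` A \<subseteq> carrier (trunc_units r)"
    using linear_in_trunc_units[OF assms(1)] by blast
  have "calG_class r ` A
      = (\<lambda>g. kernel (trunc_units r) additive_group (trunc_log_deriv r) #>\<^bsub>trunc_units r\<^esub> g)
          ` (\<lambda>a. [:1, a:]) ` A"
    by (simp add: calG_class_def kernel image_image)
  then have "card (generate (calG r) (calG_class r ` A))
      = card (generate additive_group (trunc_log_deriv r ` (\<lambda>a. [:1, a:]) ` A))"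
    using log.card_generate_FactGroup[OF linear] by (simp add: calG_def kernel)
  also have "trunc_log_deriv r ` (\<lambda>a. [:1, a:]) ` A = power_vec r ` A"
    by (simp add: image_image trunc_log_deriv_linear[OF assms(1)])
  finally show ?thesis .
qed

section \<open>The prime subfield\<close>

lemma of_nat_in_prime_subfield [simp]: "of_nat n \<in> prime_subfield"
  by (simp add: prime_subfield_def)

lemma zero_in_prime_subfield [simp]: "0 \<in> prime_subfield"
  using of_nat_in_prime_subfield[of 0] by simp

lemma one_in_prime_subfield [simp]: "1 \<in> prime_subfield"
  using of_nat_in_prime_subfield[of 1] by simp

lemma add_in_prime_subfield:
  "x \<in> prime_subfield \<Longrightarrow> y \<in> prime_subfield \<Longrightarrow> x + y \<in> prime_subfield"
  by (auto simp: prime_subfield_def simp flip: of_nat_add)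

lemma mult_in_prime_subfield:
  "x \<in> prime_subfield \<Longrightarrow> y \<in> prime_subfield \<Longrightarrow> x * y \<in> prime_subfield"
  by (auto simp: prime_subfield_def simp flip: of_nat_mult)

lemma sum_in_prime_subfield:
  "(\<And>i. i \<in> A \<Longrightarrow> f i \<in> prime_subfield) \<Longrightarrow> sum f A \<in> prime_subfield"
  by (induction A rule: infinite_finite_induct) (auto intro: add_in_prime_subfield)

context
  assumes prime_char: "prime CHAR('a::field)"
begin

lemma uminus_in_prime_subfield:
  assumes "(x :: 'a) \<in> prime_subfield"
  shows "- x \<in> prime_subfield"
proof -
  obtain n where x: "x = of_nat n" using assms by (auto simp: prime_subfield_def)
  have "(CHAR('a) - 1) * n + n = CHAR('a) * n"
    using prime_gt_0_nat[OF prime_char] by (simp add: algebra_simps)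
  then have "of_nat ((CHAR('a) - 1) * n) + x = of_nat (CHAR('a) * n)"
    by (metis x of_nat_add)
  also have "\<dots> = 0" by simp
  finally have "of_nat ((CHAR('a) - 1) * n) + x = 0" .
  then have "of_nat ((CHAR('a) - 1) * n) = - x"
    by (simp only: eq_neg_iff_add_eq_0)
  then show ?thesis by (metis of_nat_in_prime_subfield)
qed

lemma diff_in_prime_subfield:
  "(x :: 'a) \<in> prime_subfield \<Longrightarrow> y \<in> prime_subfield \<Longrightarrow> x - y \<in> prime_subfield"
  using add_in_prime_subfield[OF _ uminus_in_prime_subfield, of x y] by simp

lemma inverse_in_prime_subfield:
  assumes "(x :: 'a) \<in> prime_subfield"
  shows "inverse x \<in> prime_subfield"
proof (cases "x = 0")
  case False
  obtain n where x: "x = of_nat n" using assms by (auto simp: prime_subfield_def)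
  then have "\<not> CHAR('a) dvd n" using False by (simp add: of_nat_eq_0_iff_char_dvd)
  then have "coprime n CHAR('a)"
    using prime_imp_coprime[OF prime_char] by (simp add: coprime_commute)
  then obtain u where "[n * u = 1] (mod CHAR('a))"
    using cong_solve_coprime_nat by auto
  then have "x * of_nat u = 1"
    by (simp add: x flip: of_nat_mult of_nat_eq_iff_cong_CHAR)
  then have "inverse x = of_nat u" by (rule inverse_unique)
  then show ?thesis by simp
qed simp

lemma card_prime_subfield: "card (prime_subfield :: 'a set) = CHAR('a)"
proof -
  have pos: "CHAR('a) > 0" using prime_char by (simp add: prime_gt_0_nat)
  have "prime_subfield = (of_nat ` {..<CHAR('a)} :: 'a set)"
  proof
    show "prime_subfield \<subseteq> (of_nat ` {..<CHAR('a)} :: 'a set)"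
    proof
      fix x :: 'a
      assume "x \<in> prime_subfield"
      then obtain n where "x = of_nat n" by (auto simp: prime_subfield_def)
      then have "x = of_nat (n mod CHAR('a))"
        by (simp add: of_nat_eq_iff_cong_CHAR)
      then show "x \<in> of_nat ` {..<CHAR('a)}" using pos by auto
    qed
  qed (auto simp: prime_subfield_def)
  moreover have "inj_on (of_nat :: nat \<Rightarrow> 'a) {..<CHAR('a)}"
    by (auto intro!: inj_onI simp: of_nat_eq_iff_cong_CHAR cong_def)
  ultimately show ?thesis by (metis card_image card_lessThan)
qed

end

lemma subgroup_prime_subfield:
  assumes "prime CHAR('a::field)"
  shows "subgroup (prime_subfield :: 'a set) additive_group"
proof -
  interpret comm_group "additive_group :: 'a monoid" by (rule comm_group_additive_group)
  show ?thesis
  proof (rule subgroupI)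
    show "(prime_subfield :: 'a set) \<noteq> {}"
      using zero_in_prime_subfield by blast
  qed (auto intro: add_in_prime_subfield uminus_in_prime_subfield[OF assms])
qed

lemma CHAR_eq_if_card_eq_prime_power:
  assumes "prime p" "card (UNIV :: 'a::{field,finite} set) = p ^ m"
  shows "CHAR('a) = p"
proof -
  have prime_char: "prime CHAR('a)"
    by (simp add: prime_CHAR_semidom finite_imp_CHAR_pos)
  interpret comm_group "additive_group :: 'a monoid" by (rule comm_group_additive_group)
  have "card (prime_subfield :: 'a set) dvd order (additive_group :: 'a monoid)"
    using lagrange[OF subgroup_prime_subfield[OF prime_char]] by (metis dvd_triv_right)
  then have "CHAR('a) dvd p ^ m"
    using assms(2) card_prime_subfield[OF prime_char] by (simp add: order_def)
  then show ?thesis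
    using prime_char assms(1) by (metis prime_dvd_power primes_dvd_imp_eq)
qed

section \<open>Spans of matrix columns over the prime subfield\<close>

definition Fp_span :: "'c set \<Rightarrow> ('r \<Rightarrow> 'c \<Rightarrow> 'a::field) \<Rightarrow> ('r \<Rightarrow> 'a) set" where
  "Fp_span C M = {(\<lambda>x. \<Sum>i\<in>C. c i * M x i) | c. \<forall>i\<in>C. c i \<in> prime_subfield}"

lemma zero_in_Fp_span: "0 \<in> Fp_span C M"
  unfolding Fp_span_def by (auto simp: zero_fun_def intro!: exI[of _ "\<lambda>_. 0"])

lemma add_in_Fp_span:
  assumes "u \<in> Fp_span C M" "v \<in> Fp_span C M"
  shows "u + v \<in> Fp_span C M"
proof -
  obtain c d where c: "\<forall>i\<in>C. c i \<in> prime_subfield" "u = (\<lambda>x. \<Sum>i\<in>C. c i * M x i)"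
    and d: "\<forall>i\<in>C. d i \<in> prime_subfield" "v = (\<lambda>x. \<Sum>i\<in>C. d i * M x i)"
    using assms by (auto simp: Fp_span_def)
  then have "u + v = (\<lambda>x. \<Sum>i\<in>C. (c i + d i) * M x i)"
    by (simp add: fun_eq_iff distrib_right sum.distrib)
  with c(1) d(1) show ?thesis
    unfolding Fp_span_def by (auto intro!: exI[of _ "\<lambda>i. c i + d i"] add_in_prime_subfield)
qed

lemma scale_in_Fp_span:
  assumes "a \<in> prime_subfield" "v \<in> Fp_span C M"
  shows "(\<lambda>x. a * v x) \<in> Fp_span C M"
proof -
  obtain c where c: "\<forall>i\<in>C. c i \<in> prime_subfield" "v = (\<lambda>x. \<Sum>i\<in>C. c i * M x i)"
    using assms(2) by (auto simp: Fp_span_def)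
  then have "(\<lambda>x. a * v x) = (\<lambda>x. \<Sum>i\<in>C. (a * c i) * M x i)"
    by (simp add: sum_distrib_left mult.assoc)
  with c(1) assms(1) show ?thesis
    unfolding Fp_span_def by (auto intro!: exI[of _ "\<lambda>i. a * c i"] mult_in_prime_subfield)
qed

lemma column_in_Fp_span:
  assumes "finite C" "i \<in> C"
  shows "(\<lambda>x. M x i) \<in> Fp_span C M"
proof -
  have "(\<Sum>j\<in>C. (if j = i then 1 else 0) * M x j) = M x i" for x
  proof -
    have "(\<Sum>j\<in>C. (if j = i then 1 else 0) * M x j) = (\<Sum>j\<in>C. if j = i then M x j else 0)"
      by (rule sum.cong) auto
    then show ?thesis using assms by (simp add: sum.delta')
  qed
  then show ?thesis
    unfolding Fp_span_def by (auto intro!: exI[of _ "\<lambda>j. if j = i then 1 else 0"])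
qed

lemma Fp_span_least:
  assumes "0 \<in> K" "\<And>u v. u \<in> K \<Longrightarrow> v \<in> K \<Longrightarrow> u + v \<in> K"
    and "\<And>i a. i \<in> C \<Longrightarrow> a \<in> prime_subfield \<Longrightarrow> (\<lambda>x. a * M x i) \<in> K"
  shows "Fp_span C M \<subseteq> K"
proof
  fix v
  assume "v \<in> Fp_span C M"
  then obtain c where c: "\<forall>i\<in>C. c i \<in> prime_subfield" and v: "v = (\<lambda>x. \<Sum>i\<in>C. c i * M x i)"
    by (auto simp: Fp_span_def)
  have "(\<lambda>x. \<Sum>i\<in>J. c i * M x i) \<in> K" if "J \<subseteq> C" for J
    using that
  proof (induction J rule: infinite_finite_induct)
    case (insert i J)
    then have "(\<lambda>x. \<Sum>j\<in>insert i J. c j * M x j) = (\<lambda>x. c i * M x i) + (\<lambda>x. \<Sum>j\<in>J. c j * M x j)"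
      by (simp add: fun_eq_iff)
    with insert c show ?case by (auto intro: assms(2,3))
  qed (use assms(1) in \<open>simp_all add: zero_fun_def\<close>)
  then show "v \<in> K" using v by blast
qed

lemma Fp_span_subset:
  assumes "\<And>i. i \<in> C \<Longrightarrow> (\<lambda>x. M x i) \<in> Fp_span C' M'"
  shows "Fp_span C M \<subseteq> Fp_span C' M'"
  by (rule Fp_span_least) (auto intro: zero_in_Fp_span add_in_Fp_span scale_in_Fp_span assms)

lemma column_in_Fp_span_if_dependent:
  fixes M :: "'r \<Rightarrow> 'c \<Rightarrow> 'a::field"
  assumes "prime CHAR('a)" "finite J" "i \<notin> J"
    and "Fp_indep_cols UNIV J M" "\<not> Fp_indep_cols UNIV (insert i J) M"
  shows "(\<lambda>x. M x i) \<in> Fp_span J M"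
proof -
  obtain c where c: "\<forall>j\<in>insert i J. c j \<in> prime_subfield"
    and rel: "\<And>x. (\<Sum>j\<in>insert i J. c j * M x j) = 0" and nonzero: "\<exists>j\<in>insert i J. c j \<noteq> 0"
    using assms(5) unfolding Fp_indep_cols_def by blast
  have rel': "c i * M x i + (\<Sum>j\<in>J. c j * M x j) = 0" for x
    using rel[of x] assms(2,3) by simp
  have "c i \<noteq> 0"
  proof
    assume "c i = 0"
    then have "\<forall>j\<in>J. c j = 0"
      using assms(4) c rel' unfolding Fp_indep_cols_def by auto
    with nonzero \<open>c i = 0\<close> show False by auto
  qed
  define d where "d j = - c j / c i" for j
  have "M x i = (\<Sum>j\<in>J. d j * M x j)" for x
  proof -
    have "(\<Sum>j\<in>J. d j * M x j) = - (\<Sum>j\<in>J. c j * M x j) / c i"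
      by (simp add: d_def sum_divide_distrib sum_negf)
    also have "\<dots> = M x i"
      using rel'[of x] \<open>c i \<noteq> 0\<close> by (simp add: field_simps add_eq_0_iff)
    finally show ?thesis ..
  qed
  moreover have "\<forall>j\<in>J. d j \<in> prime_subfield"
    using c by (auto simp: d_def divide_inverse intro!: mult_in_prime_subfield
                  uminus_in_prime_subfield[OF assms(1)] inverse_in_prime_subfield[OF assms(1)])
  ultimately show ?thesis
    unfolding Fp_span_def by auto
qed

lemma card_Fp_span_indep:
  fixes M :: "'r \<Rightarrow> 'c \<Rightarrow> 'a::field"
  assumes "prime CHAR('a)" "finite J" "Fp_indep_cols UNIV J M"
  shows "card (Fp_span J M) = CHAR('a) ^ card J"
proof -
  define comb where "comb c = (\<lambda>x. \<Sum>i\<in>J. c i * M x i)" for c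
  have "Fp_span J M = comb ` (J \<rightarrow>\<^sub>E prime_subfield)"
  proof
    show "Fp_span J M \<subseteq> comb ` (J \<rightarrow>\<^sub>E prime_subfield)"
    proof
      fix v
      assume "v \<in> Fp_span J M"
      then obtain c where "\<forall>i\<in>J. c i \<in> prime_subfield" "v = comb c"
        by (auto simp: Fp_span_def comb_def)
      moreover have "comb c = comb (restrict c J)"
        by (simp add: comb_def)
      ultimately show "v \<in> comb ` (J \<rightarrow>\<^sub>E prime_subfield)" by auto
    qed
  qed (auto simp: Fp_span_def comb_def)
  moreover have "inj_on comb (J \<rightarrow>\<^sub>E prime_subfield)"
  proof (rule inj_onI)
    fix c d
    assume c: "c \<in> J \<rightarrow>\<^sub>E prime_subfield" and d: "d \<in> J \<rightarrow>\<^sub>E prime_subfield"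
      and "comb c = comb d"
    then have "\<forall>x\<in>UNIV. (\<Sum>i\<in>J. (c i - d i) * M x i) = 0"
      by (auto simp: comb_def fun_eq_iff left_diff_distrib sum_subtractf)
    moreover have "\<forall>i\<in>J. c i - d i \<in> prime_subfield"
      using c d by (auto intro: diff_in_prime_subfield[OF assms(1)])
    ultimately have "\<forall>i\<in>J. c i - d i = 0"
      using assms(3)[unfolded Fp_indep_cols_def, THEN spec[of _ "\<lambda>i. c i - d i"]] by blast
    then show "c = d" using c d by (auto intro: PiE_ext)
  qed
  ultimately show ?thesis
    using assms(2) by (simp add: card_image card_PiE card_prime_subfield[OF assms(1)])
qed

lemma Fp_rank_attained:
  assumes "finite C"
  obtains J where "J \<subseteq> C" "Fp_indep_cols R J M" "card J = Fp_rank R C M"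
    and "\<And>J'. J' \<subseteq> C \<Longrightarrow> Fp_indep_cols R J' M \<Longrightarrow> card J' \<le> card J"
proof -
  let ?ranks = "{card J | J. J \<subseteq> C \<and> Fp_indep_cols R J M}"
  have finite: "finite ?ranks"
    using assms by (auto intro: finite_subset[of _ "card ` Pow C"])
  have "Fp_indep_cols R {} M"
    by (simp add: Fp_indep_cols_def)
  then have nonempty: "?ranks \<noteq> {}"
    by blast
  have "Fp_rank R C M \<in> ?ranks"
    unfolding Fp_rank_def by (rule Max_in[OF finite nonempty])
  then obtain J where "Fp_rank R C M = card J" "J \<subseteq> C" "Fp_indep_cols R J M"
    by blast
  then have J: "J \<subseteq> C" "Fp_indep_cols R J M" "card J = Fp_rank R C M"
    by simp_all
  show ?thesis
  proof (rule that[OF J])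
    fix J'
    assume "J' \<subseteq> C" "Fp_indep_cols R J' M"
    then have "card J' \<in> ?ranks" by blast
    then show "card J' \<le> card J"
      unfolding J(3) Fp_rank_def by (rule Max_ge[OF finite])
  qed
qed

lemma card_Fp_span:
  fixes M :: "'r \<Rightarrow> 'c \<Rightarrow> 'a::field"
  assumes "prime CHAR('a)" "finite C"
  shows "card (Fp_span C M) = CHAR('a) ^ Fp_rank UNIV C M"
proof -
  obtain J where J: "J \<subseteq> C" "Fp_indep_cols UNIV J M" "card J = Fp_rank UNIV C M"
    and maximal: "\<And>J'. J' \<subseteq> C \<Longrightarrow> Fp_indep_cols UNIV J' M \<Longrightarrow> card J' \<le> card J"
    using Fp_rank_attained[OF assms(2)] by blast
  have "finite J" using J(1) assms(2) by (rule finite_subset)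
  have "Fp_span C M \<subseteq> Fp_span J M"
  proof (rule Fp_span_subset)
    fix i
    assume "i \<in> C"
    show "(\<lambda>x. M x i) \<in> Fp_span J M"
    proof (cases "i \<in> J")
      case True
      with \<open>finite J\<close> show ?thesis by (rule column_in_Fp_span)
    next
      case False
      have "\<not> Fp_indep_cols UNIV (insert i J) M"
        using maximal[of "insert i J"] \<open>i \<in> C\<close> J(1) False \<open>finite J\<close> by auto
      with assms(1) \<open>finite J\<close> False J(2) show ?thesis
        by (rule column_in_Fp_span_if_dependent)
    qed
  qed
  moreover have "Fp_span J M \<subseteq> Fp_span C M"
    using J(1) by (intro Fp_span_subset column_in_Fp_span[OF assms(2)]) blast
  ultimately show ?thesis
    using card_Fp_span_indep[OF assms(1) \<open>finite J\<close> J(2)] J(3) by simp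
qed

lemma Fp_rank_cong:
  assumes "\<And>J c. J \<subseteq> C \<Longrightarrow> \<forall>i\<in>J. c i \<in> prime_subfield \<Longrightarrow>
      (\<forall>x\<in>R. (\<Sum>i\<in>J. c i * M x i) = 0) \<longleftrightarrow> (\<forall>y\<in>R'. (\<Sum>i\<in>J. c i * M' y i) = 0)"
  shows "Fp_rank R C M = Fp_rank R' C M'"
proof -
  have "Fp_indep_cols R J M \<longleftrightarrow> Fp_indep_cols R' J M'" if "J \<subseteq> C" for J
    using assms[OF that] unfolding Fp_indep_cols_def by blast
  then have "{card J | J. J \<subseteq> C \<and> Fp_indep_cols R J M}
      = {card J | J. J \<subseteq> C \<and> Fp_indep_cols R' J M'}"
    by blast
  then show ?thesis
    unfolding Fp_rank_def by (rule arg_cong[where f = Max])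
qed

lemma generate_columns_eq_Fp_span:
  fixes M :: "'r \<Rightarrow> 'c \<Rightarrow> 'a::field"
  assumes "prime CHAR('a)" "finite C"
  shows "generate additive_group ((\<lambda>i x. M x i) ` C) = Fp_span C M"
proof -
  interpret comm_group "additive_group :: ('r \<Rightarrow> 'a) monoid" by (rule comm_group_additive_group)
  show ?thesis
  proof (rule generateI[symmetric])
    show "subgroup (Fp_span C M) additive_group"
    proof (rule subgroupI)
      show "Fp_span C M \<noteq> {}" using zero_in_Fp_span by blast
      show "inv\<^bsub>additive_group\<^esub> v \<in> Fp_span C M" if "v \<in> Fp_span C M" for v
        using scale_in_Fp_span[OF uminus_in_prime_subfield[OF assms(1) one_in_prime_subfield] that]
        by (simp add: fun_Compl_def)
    qed (simp_all add: add_in_Fp_span)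
    show "(\<lambda>i x. M x i) ` C \<subseteq> Fp_span C M"
      by (auto intro: column_in_Fp_span[OF assms(2)])
  next
    fix K
    assume K: "subgroup K additive_group" "(\<lambda>i x. M x i) ` C \<subseteq> K"
    have zero: "0 \<in> K"
      using subgroup.one_closed[OF K(1)] by simp
    have add: "u + v \<in> K" if "u \<in> K" "v \<in> K" for u v
      using subgroup.m_closed[OF K(1) that] by simp
    have multiple: "(\<lambda>x. of_nat n * M x i) \<in> K" if "i \<in> C" for i n
    proof (induction n)
      case 0
      then show ?case using zero by (simp add: zero_fun_def)
    next
      case (Suc n)
      have "(\<lambda>x. of_nat (Suc n) * M x i) = (\<lambda>x. M x i) + (\<lambda>x. of_nat n * M x i)"
        by (simp add: fun_eq_iff distrib_right)
      moreover have "(\<lambda>x. M x i) \<in> K" using K(2) that by blast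
      ultimately show ?case using Suc.IH by (simp add: add)
    qed
    show "Fp_span C M \<subseteq> K"
      by (rule Fp_span_least[OF zero add]) (auto simp: prime_subfield_def multiple)
  qed
qed

section \<open>Coordinates and the rank of \<open>G\<^sub>I\<close>\<close>

lemma Fp_coord:
  assumes "is_Fp_basis m b"
  shows "(\<forall>j<m. Fp_coord m b x j \<in> prime_subfield) \<and> (\<forall>j\<ge>m. Fp_coord m b x j = 0)
    \<and> x = (\<Sum>j<m. Fp_coord m b x j * b j)"
  using assms[unfolded is_Fp_basis_def, rule_format, of x] unfolding Fp_coord_def by (rule theI')

lemma Fp_coord_eqI:
  assumes "is_Fp_basis m b" "\<forall>j<m. d j \<in> prime_subfield" "\<forall>j\<ge>m. d j = 0"
    and "x = (\<Sum>j<m. d j * b j)"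
  shows "Fp_coord m b x = d"
proof -
  have unique: "\<exists>!c. (\<forall>j<m. c j \<in> prime_subfield) \<and> (\<forall>j\<ge>m. c j = 0) \<and> x = (\<Sum>j<m. c j * b j)"
    using assms(1) unfolding is_Fp_basis_def by blast
  show ?thesis
    unfolding Fp_coord_def by (rule the1_equality[OF unique]) (use assms(2-4) in simp)
qed

lemma Fp_coord_lincomb:
  assumes "is_Fp_basis m b" "\<forall>i\<in>J. c i \<in> prime_subfield"
  shows "Fp_coord m b (\<Sum>i\<in>J. c i * x i) = (\<lambda>j. \<Sum>i\<in>J. c i * Fp_coord m b (x i) j)"
proof (rule Fp_coord_eqI[OF assms(1)])
  show "\<forall>j<m. (\<Sum>i\<in>J. c i * Fp_coord m b (x i) j) \<in> prime_subfield"
    using Fp_coord[OF assms(1)] assms(2) by (auto intro!: sum_in_prime_subfield mult_in_prime_subfield)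
  show "\<forall>j\<ge>m. (\<Sum>i\<in>J. c i * Fp_coord m b (x i) j) = 0"
    using Fp_coord[OF assms(1)] by simp
  have "x i = (\<Sum>j<m. Fp_coord m b (x i) j * b j)" for i
    using Fp_coord[OF assms(1)] by blast
  then have "(\<Sum>i\<in>J. c i * x i) = (\<Sum>i\<in>J. c i * (\<Sum>j<m. Fp_coord m b (x i) j * b j))"
    by (intro sum.cong refl arg_cong2[where f = "(*)"])
  also have "\<dots> = (\<Sum>i\<in>J. \<Sum>j<m. c i * Fp_coord m b (x i) j * b j)"
    by (simp add: sum_distrib_left mult.assoc)
  also have "\<dots> = (\<Sum>j<m. \<Sum>i\<in>J. c i * Fp_coord m b (x i) j * b j)"
    by (rule sum.swap)
  also have "\<dots> = (\<Sum>j<m. (\<Sum>i\<in>J. c i * Fp_coord m b (x i) j) * b j)"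
    by (simp add: sum_distrib_right)
  finally show "(\<Sum>i\<in>J. c i * x i) = (\<Sum>j<m. (\<Sum>i\<in>J. c i * Fp_coord m b (x i) j) * b j)" .
qed

lemma Fp_coord_eq_0_iff:
  assumes "is_Fp_basis m b"
  shows "(\<forall>j<m. Fp_coord m b x j = 0) \<longleftrightarrow> x = 0"
proof
  assume "\<forall>j<m. Fp_coord m b x j = 0"
  moreover have "x = (\<Sum>j<m. Fp_coord m b x j * b j)"
    using Fp_coord[OF assms] by blast
  ultimately show "x = 0" by simp
next
  assume "x = 0"
  then have "Fp_coord m b x = (\<lambda>_. 0)" by (intro Fp_coord_eqI[OF assms]) simp_all
  then show "\<forall>j<m. Fp_coord m b x j = 0" by simp
qed

lemma Fp_rank_G_mat:
  assumes "is_Fp_basis m b"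
  shows "Fp_rank ({1..r} \<times> {..<m}) I (G_mat m r b \<alpha>) = Fp_rank UNIV I (\<lambda>k i. power_vec r (\<alpha> i) k)"
proof (rule Fp_rank_cong)
  fix J and c :: "nat \<Rightarrow> 'a"
  assume c: "\<forall>i\<in>J. c i \<in> prime_subfield"
  have "(\<forall>x\<in>{1..r} \<times> {..<m}. (\<Sum>i\<in>J. c i * G_mat m r b \<alpha> x i) = 0)
      \<longleftrightarrow> (\<forall>k\<in>{1..r}. \<forall>j<m. Fp_coord m b (\<Sum>i\<in>J. c i * \<alpha> i ^ k) j = 0)"
    by (auto simp: G_mat_def Fp_coord_lincomb[OF assms c])
  also have "\<dots> \<longleftrightarrow> (\<forall>k\<in>{1..r}. (\<Sum>i\<in>J. c i * \<alpha> i ^ k) = 0)"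
    by (simp add: Fp_coord_eq_0_iff[OF assms])
  also have "\<dots> \<longleftrightarrow> (\<forall>k\<in>UNIV. (\<Sum>i\<in>J. c i * power_vec r (\<alpha> i) k) = 0)"
  proof -
    have "(\<Sum>i\<in>J. c i * power_vec r (\<alpha> i) k) = (if k \<in> {1..r} then \<Sum>i\<in>J. c i * \<alpha> i ^ k else 0)" for k
      by (cases "k \<in> {1..r}") (auto simp: power_vec_def)
    then show ?thesis by auto
  qed
  finally show "(\<forall>x\<in>{1..r} \<times> {..<m}. (\<Sum>i\<in>J. c i * G_mat m r b \<alpha> x i) = 0)
      \<longleftrightarrow> (\<forall>k\<in>UNIV. (\<Sum>i\<in>J. c i * power_vec r (\<alpha> i) k) = 0)" .
qed

theorem lemma4p1:
  fixes p m r :: nat and \<alpha> :: "nat \<Rightarrow> 'a::{field,finite}" and b :: "nat \<Rightarrow> 'a"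
    and I :: "nat set"
  assumes "prime p"
    and "card (UNIV :: 'a set) = p ^ m"
    and "1 \<le> r" and "r < p"
    and "bij_betw \<alpha> {1..card (UNIV :: 'a set) - 1} (UNIV - {0})"
    and "is_Fp_basis m b"
    and "I \<subseteq> {1..card (UNIV :: 'a set) - 1}"
  shows "card (generate (calG r) (calG_class r ` \<alpha> ` I)) = p ^ (r * m)
     \<longleftrightarrow> Fp_rank ({1..r} \<times> {..<m}) I (G_mat m r b \<alpha>) = r * m"
proof -
  have char: "CHAR('a) = p"
    using assms(1,2) by (rule CHAR_eq_if_card_eq_prime_power)
  with assms(1) have prime_char: "prime CHAR('a)" by simp
  have "finite I" using assms(7) by (rule finite_subset) simp
  have "card (generate (calG r) (calG_class r ` \<alpha> ` I))
      = card (generate additive_group (power_vec r ` \<alpha> ` I))"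
    using assms(3,4) char by (intro card_generate_calG) simp_all
  also have "power_vec r ` \<alpha> ` I = (\<lambda>i k. power_vec r (\<alpha> i) k) ` I"
    by (simp add: image_image)
  also have "card (generate additive_group \<dots>) = p ^ Fp_rank UNIV I (\<lambda>k i. power_vec r (\<alpha> i) k)"
    using generate_columns_eq_Fp_span[OF prime_char \<open>finite I\<close>, of "\<lambda>k i. power_vec r (\<alpha> i) k"]
      card_Fp_span[OF prime_char \<open>finite I\<close>] char by simp
  also have "Fp_rank UNIV I (\<lambda>k i. power_vec r (\<alpha> i) k) = Fp_rank ({1..r} \<times> {..<m}) I (G_mat m r b \<alpha>)"
    by (rule Fp_rank_G_mat[OF assms(6), symmetric])
  finally show ?thesis
    using prime_gt_1_nat[OF assms(1)] by (simp add: power_inject_exp)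
qed

end
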